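(* Assume (A1) and (A2). Then for every $l\in\mathbb N$ and every bounded measurable $\varphi:\mathsf X\to\mathbb R$, $$\mathbb E\big[\widehat{\pi_0(\varphi)}_0\big]=\pi_0(\varphi),\qquad \mathbb E[\xi_{l,0}]=\pi_l(\varphi)-\pi_{l-1}(\varphi).$$
   Context: Setting. $(\mathsf X,\mathcal X)$ is a measurable space with $\mathsf X$ compact. $\tilde{\mathsf d}$ is a measurable metric on $\mathsf X$ with $\sup_{x,w\in\mathsf X}\tilde{\mathsf d}(x,w)<\infty$. $\pi$ and $(\pi_l)_{l\in\mathbb{Z}^+}$ are probability measures on $\mathsf X$, and $\Delta_l:=2^{-l}$. For each $l\in\mathbb{Z}^+$, $K_l$ is a Markov kernel on $\mathsf X$ with $\pi_lK_l=\pi_l$, and $\nu_l$ is a probability measure on $\mathsf X$. For a Markov kernel $K$ and bounded measurable $\varphi$, $K(\varphi)(x)=\int\varphi(x')K(x,dx')$, $K^n$ is the $n$-fold iterated kernel ($K^0$ the identity), and $\mu(\varphi)=\int\varphi\,d\mu$. $\|\mu-\nu\|_{tv}=\sup_{A\in\mathcal X}|\mu(A)-\nu(A)|$. $\|\varphi\|_\infty=\sup_x|\varphi(x)|$. $\mathbb{Z}^+=\{0,1,2,\dots\}$, $\mathbb N=\{1,2,\dots\}$. For $s\in\mathbb{Z}^+$, let $\tilde\nu_s$ be a probability measure on $\mathsf X^2$ both of whose marginals equal $\nu_s$, and let $\check\nu_s(d(x,w)):=\int\tilde\nu_s(d(x',w'))K_s(x',dx)\delta_{w'}(dw)$. Level-0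 chain. $(X_{n,0},W_{n,0})_{n\ge0}$ is a Markov chain on $\mathsf X^2$ with initial law $\check\nu_0$ and transition kernel $\check K_0$, where $\check K_0((x,w),\cdot)$ is a probability measure on $\mathsf X^2$ with first marginal $K_0(x,\cdot)$ and second marginal $K_0(w,\cdot)$. Its meeting time is $\tau_0=\inf\{n\ge1:X_{n,0}=W_{n,0}\}$, and the chain is faithful: $X_{n,0}=W_{n,0}$ for all $n\ge\tau_0$. Increment chains. For each $l\in\mathbb N$, $(Z_{n,l,l-1})_{n\ge0}$ with $Z_{n,l,l-1}=((X_{n,l},W_{n,l}),(X_{n,l-1},W_{n,l-1}))$ is a Markov chain on $\mathsf X^4$ with transition kernel $\check K_{l,l-1}$ such that for every $z=((x_l,w_l),(x_{l-1},w_{l-1}))\in\mathsf X^4$ and $s\in\{l,l-1\}$, the image of $\check K_{l,l-1}(z,\cdot)$ under the coordinate $x_s'$ is $K_s(x_s,\cdot)$ and under the coordinate $w_s'$ is $K_s(w_s,\cdot)$; its initial law $\check\nu_{l,l-1}$ is such that, for each $s\in\{l,l-1\}$, $(X_{0,s},W_{0,s})$ has law $\check\nu_s$. Meeting times: $\tau_s=\inf\{n\ge1:X_{n,s}=W_{n,s}\}$ for $s\in\{l,l-1\}$, $\check\tau_{l,l-1}=\tau_l\vee\tau_{l-1}$, and faithfulness holds: $X_{n,s}=W_{n,s}$ for all $n\ge\tau_s$. Estimators. For $k\in\mathbb Z^+$ and bounded measurable $\varphi$: $\widehat{\pi_s(\varphi)}_k:=\varphi(X_{k,s})+\sum_{n=k+1}^{\tau_s-1}\{\varphi(X_{n,s})-\varphi(W_{n,s})\}$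 (empty sums are $0$), computed from the level-0 chain when $s=0$ and from the chain $(Z_{n,l,l-1})$ when $s\in\{l,l-1\}$; and $\xi_{l,k}:=\widehat{\pi_l(\varphi)}_k-\widehat{\pi_{l-1}(\varphi)}_k$, both terms computed from $(Z_{n,l,l-1})_n$. Assumptions. (A1) There exist $C<\infty$, $\rho\in(0,1)$ with $\sup_{l\in\mathbb Z^+}\sup_{x\in\mathsf X}\|K_l^n(x,\cdot)-\pi_l\|_{tv}\le C\rho^n$ for all $n\in\mathbb N$. (A2) There exist $C<\infty$, $\rho\in(0,1)$ such that for all $n\in\mathbb N$: $\mathbb P(\tau_0>n)\le C\rho^n$, and for all $l\in\mathbb N$ and $s\in\{l,l-1\}$ the meeting time $\tau_s$ of the chain $(Z_{n,l,l-1})_n$ satisfies $\mathbb P(\tau_s>n)\le C\rho^n$. *)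

theory Defs
  imports "HOL-Probability.Probability"
begin

primrec kernel_pow :: "'a measure \<Rightarrow> ('a \<Rightarrow> 'a measure) \<Rightarrow> nat \<Rightarrow> 'a \<Rightarrow> 'a measure" where
  "kernel_pow M K 0 x = return M x"
| "kernel_pow M K (Suc n) x = bind (kernel_pow M K n x) K"

definition tv_dist :: "'a measure \<Rightarrow> 'a measure \<Rightarrow> real" where
  "tv_dist \<mu> \<nu> = (SUP A \<in> sets \<mu>. \<bar>measure \<mu> A - measure \<nu> A\<bar>)"

primrec path_law :: "'a measure \<Rightarrow> 'a measure \<Rightarrow> ('a \<Rightarrow> 'a measure) \<Rightarrow> nat \<Rightarrow> (nat \<Rightarrow> 'a) measure" where
  "path_law M \<nu> K 0 = distr \<nu> (PiM {..0} (\<lambda>_. M)) (\<lambda>x. \<lambda>i\<in>{..0::nat}. x)"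
| "path_law M \<nu> K (Suc n) =
     bind (path_law M \<nu> K n)
       (\<lambda>\<omega>. distr (K (\<omega> n)) (PiM {..Suc n} (\<lambda>_. M)) (\<lambda>y. fun_upd \<omega> (Suc n) y))"

definition is_markov_chain ::
  "'w measure \<Rightarrow> 'a measure \<Rightarrow> 'a measure \<Rightarrow> ('a \<Rightarrow> 'a measure) \<Rightarrow> (nat \<Rightarrow> 'w \<Rightarrow> 'a) \<Rightarrow> bool" where
  "is_markov_chain P M \<nu> K Y \<longleftrightarrow>
     (\<forall>n. Y n \<in> P \<rightarrow>\<^sub>M M) \<and>
     (\<forall>n. distr P (PiM {..n} (\<lambda>_. M)) (\<lambda>\<omega>. \<lambda>i\<in>{..n}. Y i \<omega>) = path_law M \<nu> K n)"

definition meet_time :: "(nat \<Rightarrow> 'w \<Rightarrow> 'a) \<Rightarrow> (nat \<Rightarrow> 'w \<Rightarrow> 'a) \<Rightarrow> 'w \<Rightarrow> enat" where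
  "meet_time X W \<omega> = (INF n \<in> {n. 1 \<le> n \<and> X n \<omega> = W n \<omega>}. enat n)"

text \<open>The unbiased estimator phi(X_k) + sum_{n=k+1}^{tau-1} (phi(X_n) - phi(W_n));
  set to phi(X_k) on the event tau = infinity (a null event under (A2)).\<close>
definition ub_est :: "('a \<Rightarrow> real) \<Rightarrow> (nat \<Rightarrow> 'w \<Rightarrow> 'a) \<Rightarrow> (nat \<Rightarrow> 'w \<Rightarrow> 'a) \<Rightarrow> nat \<Rightarrow> 'w \<Rightarrow> real" where
  "ub_est \<phi> X W k \<omega> = \<phi> (X k \<omega>) +
     (case meet_time X W \<omega> of
        enat t \<Rightarrow> (\<Sum>n\<in>{k+1..<t}. \<phi> (X n \<omega>) - \<phi> (W n \<omega>))
      | \<infinity> \<Rightarrow> 0)"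

definition check_nu :: "'a measure \<Rightarrow> ('a \<Rightarrow> 'a measure) \<Rightarrow> ('a \<times> 'a) measure \<Rightarrow> ('a \<times> 'a) measure" where
  "check_nu M Ks \<nu>t = bind \<nu>t (\<lambda>(x', w'). distr (Ks x') (M \<Otimes>\<^sub>M M) (\<lambda>x. (x, w')))"

end

theory Submission
  imports Defs
begin

(* Both coordinates of a coupled chain move by K, and the chain is started from check_nu, i.e.
   X_0 ~ nu K and W_0 ~ nu; so X_n ~ nu K^(n+1) runs one step ahead of W_n ~ nu K^n.  The truncated
   estimator phi(X_k) + sum_{n=k+1}^{N-1} (phi(X_n) - phi(W_n)) therefore has expectation
   nu K^N (phi) by telescoping, and nu K^N (phi) -> pi(phi) because (A1) gives setwise convergence
   nu K^N -> pi and phi is a uniform limit of step functions.  By faithfulness the truncated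
   estimator equals the full one once N >= tau, and it is dominated by B + 2 B tau, which is
   integrable because (A2) makes the tails P(tau > n) summable; dominated convergence gives
   E[estimator] = pi(phi).  The increment xi_{l,0} is the difference of two such estimators, one for
   each level of the increment chain. *)

section \<open>Meeting times and truncated estimators\<close>

lemma meet_time_le_enat_iff:
  "meet_time X W \<omega> \<le> enat N \<longleftrightarrow> (\<exists>m. 1 \<le> m \<and> m \<le> N \<and> X m \<omega> = W m \<omega>)"
proof
  assume "\<exists>m. 1 \<le> m \<and> m \<le> N \<and> X m \<omega> = W m \<omega>"
  then obtain m where m: "1 \<le> m" "m \<le> N" "X m \<omega> = W m \<omega>" by blast
  then have "meet_time X W \<omega> \<le> enat m"
    unfolding meet_time_def by (intro INF_lower) auto
  with m show "meet_time X W \<omega> \<le> enat N"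
    by (meson enat_ord_simps(1) order_trans)
next
  assume le: "meet_time X W \<omega> \<le> enat N"
  show "\<exists>m. 1 \<le> m \<and> m \<le> N \<and> X m \<omega> = W m \<omega>"
  proof (rule ccontr)
    assume "\<not> ?thesis"
    then have "enat (Suc N) \<le> meet_time X W \<omega>"
      unfolding meet_time_def
      by (intro INF_greatest) (metis (mono_tags) enat_ord_simps(1) mem_Collect_eq not_less_eq_eq)
    with le have "enat (Suc N) \<le> enat N" by (rule order_trans[rotated])
    then show False by simp
  qed
qed

lemma enat_less_meet_time_iff:
  "enat N < meet_time X W \<omega> \<longleftrightarrow> (\<forall>m. 1 \<le> m \<and> m \<le> N \<longrightarrow> X m \<omega> \<noteq> W m \<omega>)"
  using meet_time_le_enat_iff[of X W \<omega> N] by (auto simp: not_le[symmetric])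

lemma
  assumes [measurable]: "\<And>n. Measurable.pred P (\<lambda>\<omega>. X n \<omega> = W n \<omega>)"
  shows pred_enat_less_meet_time[measurable]: "Measurable.pred P (\<lambda>\<omega>. enat N < meet_time X W \<omega>)"
    and pred_meet_time_eq_infinity[measurable]: "Measurable.pred P (\<lambda>\<omega>. meet_time X W \<omega> = \<infinity>)"
proof -
  show "Measurable.pred P (\<lambda>\<omega>. enat N < meet_time X W \<omega>)" for N
    unfolding enat_less_meet_time_iff by measurable
  moreover have "x = \<infinity> \<longleftrightarrow> (\<forall>n. enat n < x)" for x :: enat
    by (cases x) auto
  ultimately show "Measurable.pred P (\<lambda>\<omega>. meet_time X W \<omega> = \<infinity>)"
    by simp
qed

definition truncated_est :: "('a \<Rightarrow> real) \<Rightarrow> (nat \<Rightarrow> 'w \<Rightarrow> 'a) \<Rightarrow> (nat \<Rightarrow> 'w \<Rightarrow> 'a) \<Rightarrow> nat \<Rightarrow> nat \<Rightarrow> 'w \<Rightarrow> real"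
  where "truncated_est \<phi> X W k N \<omega> = \<phi> (X k \<omega>) + (\<Sum>n\<in>{k+1..<N}. \<phi> (X n \<omega>) - \<phi> (W n \<omega>))"

lemma ub_est_eq_truncated_est:
  assumes faithful: "\<And>n. meet_time X W \<omega> \<le> enat n \<Longrightarrow> X n \<omega> = W n \<omega>"
    and meet: "meet_time X W \<omega> = enat t" and "t \<le> N"
  shows "ub_est \<phi> X W k \<omega> = truncated_est \<phi> X W k N \<omega>"
proof -
  have "(\<Sum>n\<in>{k+1..<t}. \<phi> (X n \<omega>) - \<phi> (W n \<omega>)) = (\<Sum>n\<in>{k+1..<N}. \<phi> (X n \<omega>) - \<phi> (W n \<omega>))"
    using \<open>t \<le> N\<close> faithful meet by (intro sum.mono_neutral_left) auto
  with meet show ?thesis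
    unfolding ub_est_def truncated_est_def by simp
qed

lemma truncated_est_tendsto_ub_est:
  assumes "\<And>n. meet_time X W \<omega> \<le> enat n \<Longrightarrow> X n \<omega> = W n \<omega>"
  shows "(\<lambda>N. if meet_time X W \<omega> \<le> enat N then truncated_est \<phi> X W k N \<omega> else \<phi> (X k \<omega>)) \<longlonglongrightarrow> ub_est \<phi> X W k \<omega>"
proof (cases "meet_time X W \<omega>")
  case (enat t)
  then show ?thesis
    using ub_est_eq_truncated_est[OF assms enat]
    by (intro tendsto_eventually) (auto simp: eventually_sequentially intro!: exI[of _ t])
next
  case infinity
  then show ?thesis by (simp add: ub_est_def)
qed

lemma borel_measurable_truncated_est[measurable]:
  assumes [measurable]: "\<And>n. X n \<in> P \<rightarrow>\<^sub>M M" "\<And>n. W n \<in> P \<rightarrow>\<^sub>M M" "\<phi> \<in> borel_measurable M"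
  shows "truncated_est \<phi> X W k N \<in> borel_measurable P"
  unfolding truncated_est_def by measurable

lemma borel_measurable_ub_est:
  assumes [measurable]: "\<And>n. X n \<in> P \<rightarrow>\<^sub>M M" "\<And>n. W n \<in> P \<rightarrow>\<^sub>M M"
      "\<And>n. Measurable.pred P (\<lambda>\<omega>. X n \<omega> = W n \<omega>)" "\<phi> \<in> borel_measurable M"
    and faithful: "\<And>\<omega> n. \<omega> \<in> space P \<Longrightarrow> meet_time X W \<omega> \<le> enat n \<Longrightarrow> X n \<omega> = W n \<omega>"
  shows "ub_est \<phi> X W k \<in> borel_measurable P"
proof (rule borel_measurable_LIMSEQ_metric)
  define T where "T N \<omega> = (if meet_time X W \<omega> \<le> enat N then truncated_est \<phi> X W k N \<omega> else \<phi> (X k \<omega>))"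
    for N \<omega>
  show "T N \<in> borel_measurable P" for N
    unfolding T_def not_less[symmetric] by measurable
  show "(\<lambda>N. T N \<omega>) \<longlonglongrightarrow> ub_est \<phi> X W k \<omega>" if "\<omega> \<in> space P" for \<omega>
    unfolding T_def using that by (simp add: truncated_est_tendsto_ub_est faithful)
qed

lemma AE_meet_time_finite:
  assumes P: "finite_measure P"
    and [measurable]: "\<And>n. Measurable.pred P (\<lambda>\<omega>. X n \<omega> = W n \<omega>)"
    and tail: "(\<lambda>n. measure P {\<omega> \<in> space P. enat n < meet_time X W \<omega>}) \<longlonglongrightarrow> 0"
  shows "AE \<omega> in P. meet_time X W \<omega> \<noteq> \<infinity>"
proof -
  let ?N = "{\<omega> \<in> space P. meet_time X W \<omega> = \<infinity>}"
  have "measure P ?N \<le> measure P {\<omega> \<in> space P. enat n < meet_time X W \<omega>}" for n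
    by (rule finite_measure.finite_measure_mono[OF P]) auto
  then have "measure P ?N \<le> 0"
    by (intro LIMSEQ_le_const[OF tail]) auto
  then have "emeasure P ?N = 0"
    by (simp add: finite_measure.emeasure_eq_measure[OF P] measure_le_0_iff)
  then show ?thesis
    by (intro AE_I[of _ _ ?N]) auto
qed

lemma integrable_count_before_meet_time:
  assumes P: "finite_measure P"
    and [measurable]: "\<And>n. Measurable.pred P (\<lambda>\<omega>. X n \<omega> = W n \<omega>)"
    and tail: "summable (\<lambda>n. measure P {\<omega> \<in> space P. enat n < meet_time X W \<omega>})"
  shows "integrable P (\<lambda>\<omega>. \<Sum>n. of_bool (enat n < meet_time X W \<omega>) :: real)"
proof (rule integrable_suminf)
  interpret finite_measure P by (rule P)
  have indicator_eq: "(\<integral>\<omega>. of_bool (enat n < meet_time X W \<omega>) \<partial>P)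
      = measure P {\<omega> \<in> space P. enat n < meet_time X W \<omega>}" for n
  proof -
    have "(\<integral>\<omega>. of_bool (enat n < meet_time X W \<omega>) \<partial>P)
        = (\<integral>\<omega>. indicator {\<omega> \<in> space P. enat n < meet_time X W \<omega>} \<omega> \<partial>P)"
      by (intro Bochner_Integration.integral_cong) auto
    also have "\<dots> = measure P {\<omega> \<in> space P. enat n < meet_time X W \<omega>}"
      by (simp add: Int_absorb2)
    finally show ?thesis .
  qed
  show "integrable P (\<lambda>\<omega>. of_bool (enat n < meet_time X W \<omega>) :: real)" for n
    by (intro integrable_const_bound[where B=1]) auto
  show "summable (\<lambda>n. \<integral>\<omega>. norm (of_bool (enat n < meet_time X W \<omega>) :: real) \<partial>P)"
    using tail by (simp add: indicator_eq)
  have "AE \<omega> in P. meet_time X W \<omega> \<noteq> \<infinity>"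
    using P by (rule AE_meet_time_finite) (auto intro: summable_LIMSEQ_zero[OF tail])
  then show "AE \<omega> in P. summable (\<lambda>n. norm (of_bool (enat n < meet_time X W \<omega>) :: real))"
  proof eventually_elim
    case (elim \<omega>)
    then obtain t where "meet_time X W \<omega> = enat t" by auto
    then show ?case by (intro summable_finite[of "{..<t}"]) auto
  qed
qed

lemma abs_truncated_est_le:
  assumes bounded: "\<And>n. \<bar>\<phi> (X n \<omega>)\<bar> \<le> B" "\<And>n. \<bar>\<phi> (W n \<omega>)\<bar> \<le> B"
    and faithful: "\<And>n. meet_time X W \<omega> \<le> enat n \<Longrightarrow> X n \<omega> = W n \<omega>"
    and finite: "meet_time X W \<omega> \<noteq> \<infinity>"
  shows "\<bar>truncated_est \<phi> X W k N \<omega>\<bar> \<le> B + 2 * B * (\<Sum>n. of_bool (enat n < meet_time X W \<omega>))"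
proof -
  obtain t where t: "meet_time X W \<omega> = enat t"
    using finite by auto
  have summable: "summable (\<lambda>n. of_bool (enat n < meet_time X W \<omega>) :: real)"
    using t by (intro summable_finite[of "{..<t}"]) auto
  have "0 \<le> B"
    using bounded(1)[of 0] by linarith
  have increment: "\<bar>\<phi> (X n \<omega>) - \<phi> (W n \<omega>)\<bar> \<le> 2 * B * of_bool (enat n < meet_time X W \<omega>)" for n
    using bounded[of n] faithful[of n] by (cases "enat n < meet_time X W \<omega>") (auto simp: not_less)
  have "\<bar>truncated_est \<phi> X W k N \<omega>\<bar> \<le> \<bar>\<phi> (X k \<omega>)\<bar> + (\<Sum>n\<in>{k+1..<N}. \<bar>\<phi> (X n \<omega>) - \<phi> (W n \<omega>)\<bar>)"
    unfolding truncated_est_def by (rule order_trans[OF abs_triangle_ineq add_left_mono[OF sum_abs]])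
  also have "\<dots> \<le> B + (\<Sum>n\<in>{k+1..<N}. 2 * B * of_bool (enat n < meet_time X W \<omega>))"
    by (intro add_mono bounded sum_mono increment)
  also have "\<dots> = B + 2 * B * (\<Sum>n\<in>{k+1..<N}. of_bool (enat n < meet_time X W \<omega>))"
    by (simp only: sum_distrib_left)
  also have "\<dots> \<le> B + 2 * B * (\<Sum>n. of_bool (enat n < meet_time X W \<omega>))"
    using \<open>0 \<le> B\<close> by (intro add_left_mono mult_left_mono sum_le_suminf[OF summable]) auto
  finally show ?thesis .
qed

lemma ub_est_unbiased:
  fixes \<phi> :: "'a \<Rightarrow> real" and a :: "nat \<Rightarrow> real"
  assumes P: "prob_space P"
    and measurable[measurable]: "\<And>n. X n \<in> P \<rightarrow>\<^sub>M M" "\<And>n. W n \<in> P \<rightarrow>\<^sub>M M"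
      "\<And>n. Measurable.pred P (\<lambda>\<omega>. X n \<omega> = W n \<omega>)" "\<phi> \<in> borel_measurable M"
    and bounded: "\<And>x. x \<in> space M \<Longrightarrow> \<bar>\<phi> x\<bar> \<le> B"
    and faithful: "\<And>\<omega> n. \<omega> \<in> space P \<Longrightarrow> meet_time X W \<omega> \<le> enat n \<Longrightarrow> X n \<omega> = W n \<omega>"
    and tail: "summable (\<lambda>n. measure P {\<omega> \<in> space P. enat n < meet_time X W \<omega>})"
    and EX: "\<And>n. (\<integral>\<omega>. \<phi> (X n \<omega>) \<partial>P) = a (Suc n)"
    and EW: "\<And>n. (\<integral>\<omega>. \<phi> (W n \<omega>) \<partial>P) = a n"
    and lim: "a \<longlonglongrightarrow> L"
  shows "integrable P (ub_est \<phi> X W k) \<and> (\<integral>\<omega>. ub_est \<phi> X W k \<omega> \<partial>P) = L"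
proof -
  interpret prob_space P by (rule P)
  define w where "w \<omega> = B + 2 * B * (\<Sum>n. of_bool (enat n < meet_time X W \<omega>))" for \<omega>
  have finite: "AE \<omega> in P. meet_time X W \<omega> \<noteq> \<infinity>"
    using finite_measure_axioms by (rule AE_meet_time_finite) (auto intro: summable_LIMSEQ_zero[OF tail])
  have bounded_P: "\<bar>\<phi> (X n \<omega>)\<bar> \<le> B" "\<bar>\<phi> (W n \<omega>)\<bar> \<le> B" if "\<omega> \<in> space P" for n \<omega>
    using that by (auto intro!: bounded measurable_space[of _ P M])
  have w_integrable: "integrable P w"
    unfolding w_def using integrable_count_before_meet_time[OF finite_measure_axioms _ tail] by auto
  have dominated: "AE \<omega> in P. norm (truncated_est \<phi> X W k N \<omega>) \<le> w \<omega>" for N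
    using finite AE_space by eventually_elim (auto simp: w_def intro!: abs_truncated_est_le bounded_P faithful)
  have converges: "AE \<omega> in P. (\<lambda>N. truncated_est \<phi> X W k N \<omega>) \<longlonglongrightarrow> ub_est \<phi> X W k \<omega>"
    using finite AE_space
  proof eventually_elim
    case (elim \<omega>)
    then obtain t where t: "meet_time X W \<omega> = enat t" by auto
    with elim show ?case
      using ub_est_eq_truncated_est[OF faithful[of \<omega>] t]
      by (intro tendsto_eventually) (auto simp: eventually_sequentially intro!: exI[of _ t])
  qed
  have integral_truncated_est: "(\<lambda>N. \<integral>\<omega>. truncated_est \<phi> X W k N \<omega> \<partial>P) \<longlonglongrightarrow> L"
  proof (rule Lim_transform_eventually[OF lim])
    have integrable: "integrable P (\<lambda>\<omega>. \<phi> (X n \<omega>))" "integrable P (\<lambda>\<omega>. \<phi> (W n \<omega>))" for n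
      by (auto intro!: integrable_const_bound[where B=B] bounded_P)
    have "(\<integral>\<omega>. truncated_est \<phi> X W k N \<omega> \<partial>P) = a N" if "k < N" for N
      using that unfolding truncated_est_def
      by (simp add: integrable EX EW integral_sum sum_Suc_diff')
    then show "\<forall>\<^sub>F N in sequentially. a N = (\<integral>\<omega>. truncated_est \<phi> X W k N \<omega> \<partial>P)"
      by (auto simp: eventually_sequentially intro!: exI[of _ "Suc k"])
  qed
  note DCT = borel_measurable_ub_est[OF measurable faithful]
    borel_measurable_truncated_est[OF measurable(1,2,4)] w_integrable converges dominated
  show ?thesis
    using integrable_dominated_convergence[OF DCT]
      LIMSEQ_unique[OF integral_dominated_convergence[OF DCT] integral_truncated_est]
    by simp
qed

section \<open>Iterated kernels and Markov chains\<close>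

lemma bind_in_space_prob_algebra:
  "\<mu> \<in> space (prob_algebra M) \<Longrightarrow> N \<in> M \<rightarrow>\<^sub>M prob_algebra L \<Longrightarrow> bind \<mu> N \<in> space (prob_algebra L)"
  by (simp add: space_prob_algebra prob_space_bind' sets_bind')

lemma kernel_pow_0: "kernel_pow M K 0 = return M"
  by (simp add: fun_eq_iff)

lemma kernel_pow_Suc: "kernel_pow M K (Suc n) = (\<lambda>x. bind (kernel_pow M K n x) K)"
  by (simp add: fun_eq_iff)

(* Otherwise the simplifier eta-expands unapplied terms such as kernel_pow M K (Suc n), so that
   kernel_pow_0 and kernel_pow_Suc no longer match. *)
declare kernel_pow.simps[simp del]

lemma measurable_kernel_pow:
  assumes K: "K \<in> M \<rightarrow>\<^sub>M prob_algebra M"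
  shows "kernel_pow M K n \<in> M \<rightarrow>\<^sub>M prob_algebra M"
proof (induction n)
  case 0
  show ?case
    by (simp add: kernel_pow_0 measurable_return_prob_space)
next
  case (Suc n)
  show ?case
    unfolding kernel_pow_Suc by (rule measurable_bind_prob_space[OF Suc K])
qed

lemma bind_kernel_pow_Suc:
  assumes K: "K \<in> M \<rightarrow>\<^sub>M prob_algebra M" and "sets \<mu> = sets M"
  shows "bind (bind \<mu> (kernel_pow M K n)) K = bind \<mu> (kernel_pow M K (Suc n))"
proof -
  have "kernel_pow M K n \<in> \<mu> \<rightarrow>\<^sub>M subprob_algebra M"
    using measurable_prob_algebraD[OF measurable_kernel_pow[OF K]] \<open>sets \<mu> = sets M\<close>
    by (simp cong: measurable_cong_sets)
  then show ?thesis
    by (simp add: bind_assoc[OF _ measurable_prob_algebraD[OF K]] kernel_pow_Suc)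
qed

lemma bind_bind_kernel_pow:
  assumes K: "K \<in> M \<rightarrow>\<^sub>M prob_algebra M" and \<nu>: "\<nu> \<in> space (prob_algebra M)"
  shows "bind (bind \<nu> K) (kernel_pow M K n) = bind \<nu> (kernel_pow M K (Suc n))"
proof -
  have sets: "sets (bind \<nu> K) = sets M" "sets \<nu> = sets M"
    using \<nu> bind_in_space_prob_algebra[OF \<nu> K] by (simp_all add: space_prob_algebra)
  show ?thesis
  proof (induction n)
    case 0
    show ?case
      using bind_kernel_pow_Suc[OF K sets(2), of 0] sets by (simp add: kernel_pow_0 bind_return'')
  next
    case (Suc n)
    then show ?case
      by (metis bind_kernel_pow_Suc[OF K] sets)
  qed
qed

lemma distr_bind_kernel_pow:
  assumes Kc: "Kc \<in> S \<rightarrow>\<^sub>M prob_algebra S" and K: "K \<in> M \<rightarrow>\<^sub>M prob_algebra M"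
    and c: "c \<in> S \<rightarrow>\<^sub>M M" and intertwine: "\<And>z. z \<in> space S \<Longrightarrow> distr (Kc z) M c = K (c z)"
    and \<mu>: "\<mu> \<in> space (prob_algebra S)"
  shows "distr (bind \<mu> (kernel_pow S Kc n)) M c = bind (distr \<mu> M c) (kernel_pow M K n)"
proof (induction n)
  case 0
  have "sets \<mu> = sets S"
    using \<mu> by (simp add: space_prob_algebra)
  then show ?case
    by (simp add: kernel_pow_0 bind_return'')
next
  case (Suc n)
  define \<mu>n where "\<mu>n = bind \<mu> (kernel_pow S Kc n)"
  have "\<mu>n \<in> space (prob_algebra S)"
    unfolding \<mu>n_def by (rule bind_in_space_prob_algebra[OF \<mu> measurable_kernel_pow[OF Kc]])
  then have sets: "sets \<mu>n = sets S" and nonempty: "space \<mu>n \<noteq> {}"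
    by (auto simp: space_prob_algebra prob_space.not_empty)
  have "distr (bind \<mu>n Kc) M c = bind \<mu>n (\<lambda>z. distr (Kc z) M c)"
    using measurable_prob_algebraD[OF Kc] sets
    by (intro distr_bind[OF _ nonempty c]) (simp cong: measurable_cong_sets)
  also have "\<dots> = bind \<mu>n (\<lambda>z. K (c z))"
    using sets_eq_imp_space_eq[OF sets] by (intro bind_cong refl) (simp add: intertwine)
  also have "\<dots> = bind (distr \<mu>n M c) K"
    using c sets by (intro bind_distr[symmetric, OF _ measurable_prob_algebraD[OF K] nonempty])
      (simp cong: measurable_cong_sets)
  also have "\<dots> = bind (distr \<mu> M c) (kernel_pow M K (Suc n))"
    using Suc by (simp add: \<mu>n_def bind_kernel_pow_Suc[OF K])
  finally show ?case
    using \<mu> by (simp add: \<mu>n_def bind_kernel_pow_Suc[OF Kc] space_prob_algebra)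
qed

lemma markov_chain_path_law:
  assumes P: "prob_space P" and chain: "is_markov_chain P M \<nu> K Y"
  shows "prob_space (path_law M \<nu> K n)" and "sets (path_law M \<nu> K n) = sets (PiM {..n} (\<lambda>_. M))"
    and "distr P M (Y n) = distr (path_law M \<nu> K n) M (\<lambda>\<omega>. \<omega> n)"
proof -
  have Y: "Y i \<in> P \<rightarrow>\<^sub>M M" for i
    using chain by (simp add: is_markov_chain_def)
  have path: "(\<lambda>\<omega>. \<lambda>i\<in>{..n}. Y i \<omega>) \<in> P \<rightarrow>\<^sub>M PiM {..n} (\<lambda>_. M)"
    by (rule measurable_restrict) (rule Y)
  have law: "path_law M \<nu> K n = distr P (PiM {..n} (\<lambda>_. M)) (\<lambda>\<omega>. \<lambda>i\<in>{..n}. Y i \<omega>)"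
    using chain by (simp add: is_markov_chain_def)
  show "prob_space (path_law M \<nu> K n)"
    unfolding law by (rule prob_space.prob_space_distr[OF P path])
  show "sets (path_law M \<nu> K n) = sets (PiM {..n} (\<lambda>_. M))"
    unfolding law by simp
  have "distr (path_law M \<nu> K n) M (\<lambda>\<omega>. \<omega> n) = distr P M ((\<lambda>\<omega>. \<omega> n) \<circ> (\<lambda>\<omega>. \<lambda>i\<in>{..n}. Y i \<omega>))"
    unfolding law by (rule distr_distr[OF measurable_component_singleton path]) simp
  also have "(\<lambda>\<omega>. \<omega> n) \<circ> (\<lambda>\<omega>. \<lambda>i\<in>{..n}. Y i \<omega>) = Y n"
    by (auto simp: fun_eq_iff)
  finally show "distr P M (Y n) = distr (path_law M \<nu> K n) M (\<lambda>\<omega>. \<omega> n)" ..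
qed

lemma distr_path_law_0:
  assumes "sets \<nu> = sets M"
  shows "distr (path_law M \<nu> K 0) M (\<lambda>\<omega>. \<omega> 0) = \<nu>"
proof -
  have "(\<lambda>x. \<lambda>i\<in>{..0::nat}. x) \<in> \<nu> \<rightarrow>\<^sub>M PiM {..0} (\<lambda>_. M)"
    using assms by (intro measurable_restrict) (simp cong: measurable_cong_sets)
  then have "distr (path_law M \<nu> K 0) M (\<lambda>\<omega>. \<omega> 0) = distr \<nu> M (\<lambda>x. x)"
    by (simp add: distr_distr comp_def)
  also have "\<dots> = \<nu>"
    by (rule distr_id2[OF assms[symmetric]])
  finally show ?thesis .
qed

lemma distr_path_law_Suc:
  assumes K: "K \<in> M \<rightarrow>\<^sub>M subprob_algebra M"
    and sets: "sets (path_law M \<nu> K n) = sets (PiM {..n} (\<lambda>_. M))"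
    and nonempty: "space (path_law M \<nu> K n) \<noteq> {}"
  shows "distr (path_law M \<nu> K (Suc n)) M (\<lambda>\<omega>. \<omega> (Suc n)) = bind (distr (path_law M \<nu> K n) M (\<lambda>\<omega>. \<omega> n)) K"
proof -
  let ?L = "path_law M \<nu> K n" and ?\<Pi> = "PiM {..Suc n} (\<lambda>_. M)"
  have last: "(\<lambda>\<omega>. \<omega> n) \<in> ?L \<rightarrow>\<^sub>M M"
    using sets by (simp cong: measurable_cong_sets)
  have extend: "(\<lambda>(\<omega>, y). fun_upd \<omega> (Suc n) y) \<in> ?L \<Otimes>\<^sub>M M \<rightarrow>\<^sub>M ?\<Pi>"
  proof -
    have "(\<lambda>z. (fst z)(Suc n := snd z)) \<in> PiM {..n} (\<lambda>_. M) \<Otimes>\<^sub>M M \<rightarrow>\<^sub>M ?\<Pi>"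
      by (rule measurable_fun_upd[where J="{..n}", OF _ measurable_fst measurable_snd]) auto
    then show ?thesis
      by (subst measurable_cong_sets[OF sets_pair_measure_cong[OF sets refl] refl]) (simp add: case_prod_beta')
  qed
  have step: "(\<lambda>\<omega>. distr (K (\<omega> n)) ?\<Pi> (\<lambda>y. fun_upd \<omega> (Suc n) y)) \<in> ?L \<rightarrow>\<^sub>M subprob_algebra ?\<Pi>"
    by (rule measurable_distr2[OF extend measurable_compose[OF last K]])
  have "distr (path_law M \<nu> K (Suc n)) M (\<lambda>\<omega>. \<omega> (Suc n))
      = bind ?L (\<lambda>\<omega>. distr (distr (K (\<omega> n)) ?\<Pi> (\<lambda>y. fun_upd \<omega> (Suc n) y)) M (\<lambda>\<omega>'. \<omega>' (Suc n)))"
    unfolding path_law.simps by (rule distr_bind[OF step nonempty measurable_component_singleton]) simp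
  also have "\<dots> = bind ?L (\<lambda>\<omega>. K (\<omega> n))"
  proof (intro bind_cong refl)
    fix \<omega> assume \<omega>: "\<omega> \<in> space ?L"
    have sets_K: "sets (K (\<omega> n)) = sets M"
      using measurable_space[OF last \<omega>] K by (simp add: sets_kernel)
    have "(\<lambda>y. fun_upd \<omega> (Suc n) y) \<in> K (\<omega> n) \<rightarrow>\<^sub>M ?\<Pi>"
      using measurable_Pair2[OF extend \<omega>] sets_K by (simp cong: measurable_cong_sets)
    then have "distr (distr (K (\<omega> n)) ?\<Pi> (\<lambda>y. fun_upd \<omega> (Suc n) y)) M (\<lambda>\<omega>'. \<omega>' (Suc n)) = distr (K (\<omega> n)) M (\<lambda>y. y)"
      by (simp add: distr_distr comp_def)
    also have "\<dots> = K (\<omega> n)"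
      by (rule distr_id2[OF sets_K[symmetric]])
    finally show "distr (distr (K (\<omega> n)) ?\<Pi> (\<lambda>y. fun_upd \<omega> (Suc n) y)) M (\<lambda>\<omega>'. \<omega>' (Suc n)) = K (\<omega> n)" .
  qed
  also have "\<dots> = bind (distr ?L M (\<lambda>\<omega>. \<omega> n)) K"
    by (rule bind_distr[OF last K nonempty, symmetric])
  finally show ?thesis .
qed

lemma markov_chain_distr:
  assumes P: "prob_space P" and chain: "is_markov_chain P M \<nu> K Y"
    and K: "K \<in> M \<rightarrow>\<^sub>M prob_algebra M" and \<nu>: "\<nu> \<in> space (prob_algebra M)"
  shows "distr P M (Y n) = bind \<nu> (kernel_pow M K n)"
proof (induction n)
  case 0
  have "sets \<nu> = sets M"
    using \<nu> by (simp add: space_prob_algebra)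
  then show ?case
    by (simp only: markov_chain_path_law(3)[OF P chain] distr_path_law_0 kernel_pow_0 bind_return'')
next
  case (Suc n)
  note path_law = markov_chain_path_law[OF P chain, of n]
  have "distr P M (Y (Suc n)) = bind (distr P M (Y n)) K"
    using distr_path_law_Suc[OF measurable_prob_algebraD[OF K] path_law(2) prob_space.not_empty[OF path_law(1)]]
    by (simp add: markov_chain_path_law(3)[OF P chain])
  with \<nu> show ?case
    by (simp add: Suc bind_kernel_pow_Suc[OF K] space_prob_algebra)
qed

lemma markov_chain_distr_coordinate:
  assumes P: "prob_space P" and chain: "is_markov_chain P S \<nu> Kc Y"
    and Kc: "Kc \<in> S \<rightarrow>\<^sub>M prob_algebra S" and \<nu>: "\<nu> \<in> space (prob_algebra S)"
    and K: "K \<in> M \<rightarrow>\<^sub>M prob_algebra M" and c: "c \<in> S \<rightarrow>\<^sub>M M"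
    and intertwine: "\<And>z. z \<in> space S \<Longrightarrow> distr (Kc z) M c = K (c z)"
  shows "distr P M (\<lambda>\<omega>. c (Y n \<omega>)) = bind (distr \<nu> M c) (kernel_pow M K n)"
proof -
  have "Y n \<in> P \<rightarrow>\<^sub>M S"
    using chain by (simp add: is_markov_chain_def)
  then have "distr P M (\<lambda>\<omega>. c (Y n \<omega>)) = distr (distr P S (Y n)) M c"
    using c by (simp add: distr_distr comp_def)
  also have "\<dots> = bind (distr \<nu> M c) (kernel_pow M K n)"
    by (simp add: markov_chain_distr[OF P chain Kc \<nu>] distr_bind_kernel_pow[OF Kc K c intertwine \<nu>])
  finally show ?thesis .
qed

section \<open>Convergence of the iterated laws\<close>

lemma abs_measure_diff_le_tv_dist:
  assumes "prob_space \<mu>" "prob_space \<nu>" "A \<in> sets \<mu>"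
  shows "\<bar>measure \<mu> A - measure \<nu> A\<bar> \<le> tv_dist \<mu> \<nu>"
  unfolding tv_dist_def
proof (rule cSUP_upper[OF assms(3)])
  have "\<bar>measure \<mu> B - measure \<nu> B\<bar> \<le> 1" for B
    using prob_space.prob_le_1[OF assms(1), of B] prob_space.prob_le_1[OF assms(2), of B]
      measure_nonneg[of \<mu> B] measure_nonneg[of \<nu> B]
    by linarith
  then show "bdd_above ((\<lambda>B. \<bar>measure \<mu> B - measure \<nu> B\<bar>) ` sets \<mu>)"
    by (intro bdd_aboveI[where M=1]) auto
qed

lemma abs_integral_diff_le:
  fixes f g :: "'a \<Rightarrow> real"
  assumes "prob_space \<mu>" "integrable \<mu> f" "integrable \<mu> g"
    and close: "\<And>x. x \<in> space \<mu> \<Longrightarrow> \<bar>f x - g x\<bar> \<le> e"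
  shows "\<bar>(\<integral>x. f x \<partial>\<mu>) - (\<integral>x. g x \<partial>\<mu>)\<bar> \<le> e"
proof -
  interpret prob_space \<mu> by fact
  have "\<bar>(\<integral>x. f x \<partial>\<mu>) - (\<integral>x. g x \<partial>\<mu>)\<bar> = \<bar>\<integral>x. f x - g x \<partial>\<mu>\<bar>"
    using assms by simp
  also have "\<dots> \<le> (\<integral>x. \<bar>f x - g x\<bar> \<partial>\<mu>)"
    by (rule integral_abs_bound)
  also have "\<dots> \<le> (\<integral>x. e \<partial>\<mu>)"
    using assms by (intro integral_mono) auto
  finally show ?thesis
    by (simp add: prob_space)
qed

lemma measure_bind_kernel_pow_tendsto:
  assumes K: "K \<in> M \<rightarrow>\<^sub>M prob_algebra M" and \<nu>: "\<nu> \<in> space (prob_algebra M)"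
    and \<pi>: "\<pi> \<in> space (prob_algebra M)" and A: "A \<in> sets M"
    and tv: "\<And>x n. x \<in> space M \<Longrightarrow> 1 \<le> n \<Longrightarrow> tv_dist (kernel_pow M K n x) \<pi> \<le> e n"
    and e: "e \<longlonglongrightarrow> 0"
  shows "(\<lambda>n. measure (bind \<nu> (kernel_pow M K n)) A) \<longlonglongrightarrow> measure \<pi> A"
proof -
  have sets_\<nu>: "sets \<nu> = sets M" and "prob_space \<nu>" and "prob_space \<pi>"
    using \<nu> \<pi> by (auto simp: space_prob_algebra)
  interpret \<nu>: prob_space \<nu> by fact
  have "\<bar>measure (bind \<nu> (kernel_pow M K n)) A - measure \<pi> A\<bar> \<le> e n" if "1 \<le> n" for n
  proof -
    have kernel: "kernel_pow M K n \<in> \<nu> \<rightarrow>\<^sub>M prob_algebra M"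
      using measurable_kernel_pow[OF K] sets_\<nu> by (simp cong: measurable_cong_sets)
    have Kn: "prob_space (kernel_pow M K n x)" "sets (kernel_pow M K n x) = sets M" if "x \<in> space \<nu>" for x
      using measurable_space[OF kernel that] by (auto simp: space_prob_algebra)
    have "measure (bind \<nu> (kernel_pow M K n)) A = (\<integral>x. measure (kernel_pow M K n x) A \<partial>\<nu>)"
      by (rule \<nu>.measure_bind[OF measurable_prob_algebraD[OF kernel] A])
    also have "\<bar>\<dots> - (\<integral>x. measure \<pi> A \<partial>\<nu>)\<bar> \<le> e n"
    proof (rule abs_integral_diff_le)
      show "integrable \<nu> (\<lambda>x. measure (kernel_pow M K n x) A)"
        using measurable_compose[OF kernel measurable_measure_prob_algebra[OF A]] Kn
        by (intro \<nu>.integrable_const_bound[where B=1]) (auto simp: prob_space.prob_le_1)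
      show "\<bar>measure (kernel_pow M K n x) A - measure \<pi> A\<bar> \<le> e n" if "x \<in> space \<nu>" for x
        using abs_measure_diff_le_tv_dist[OF Kn(1)[OF that] \<open>prob_space \<pi>\<close>, of A] A Kn(2)[OF that]
          tv[of x n] that \<open>1 \<le> n\<close> sets_eq_imp_space_eq[OF sets_\<nu>]
        by simp
    qed (simp_all add: \<open>prob_space \<nu>\<close>)
    finally show ?thesis
      by (simp add: \<nu>.prob_space)
  qed
  then have "(\<lambda>n. measure (bind \<nu> (kernel_pow M K n)) A - measure \<pi> A) \<longlonglongrightarrow> 0"
    by (intro Lim_null_comparison[OF _ e]) (auto simp: eventually_sequentially intro!: exI[of _ 1])
  then show ?thesis
    by (simp add: LIM_zero_iff)
qed

lemma tendsto_if_uniformly_approximated: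
  fixes f :: "nat \<Rightarrow> real"
  assumes approx: "\<And>e. 0 < e \<Longrightarrow> \<exists>g l. g \<longlonglongrightarrow> l \<and> (\<forall>n. \<bar>f n - g n\<bar> \<le> e) \<and> \<bar>L - l\<bar> \<le> e"
  shows "f \<longlonglongrightarrow> L"
proof (rule LIMSEQ_I)
  fix r :: real
  assume "0 < r"
  then obtain g l where g: "g \<longlonglongrightarrow> l" and f: "\<And>n. \<bar>f n - g n\<bar> \<le> r / 4" and L: "\<bar>L - l\<bar> \<le> r / 4"
    using approx[of "r / 4"] by auto
  obtain N where N: "\<And>n. N \<le> n \<Longrightarrow> norm (g n - l) < r / 4"
    using LIMSEQ_D[OF g, of "r / 4"] \<open>0 < r\<close> by auto
  have "norm (f n - L) < r" if "N \<le> n" for n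
    using f[of n] L N[OF that] unfolding real_norm_def abs_le_iff abs_less_iff by linarith
  then show "\<exists>N. \<forall>n\<ge>N. norm (f n - L) < r"
    by blast
qed

lemma uniform_approximation_by_step_function:
  fixes \<phi> :: "'a \<Rightarrow> real"
  assumes \<phi>[measurable]: "\<phi> \<in> borel_measurable M"
    and bounded: "\<And>x. x \<in> space M \<Longrightarrow> \<bar>\<phi> x\<bar> \<le> B" and "0 < e"
  obtains J :: "int set" and A :: "int \<Rightarrow> 'a set" and c
  where "finite J" "\<And>j. A j \<in> sets M"
    "\<And>x. x \<in> space M \<Longrightarrow> \<bar>\<phi> x - (\<Sum>j\<in>J. c j * indicator (A j) x)\<bar> \<le> e"
proof -
  define J where "J = {\<lfloor>- B / e\<rfloor>..\<lfloor>B / e\<rfloor>}"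
  define A where "A j = {x \<in> space M. \<lfloor>\<phi> x / e\<rfloor> = j}" for j
  have "\<bar>\<phi> x - (\<Sum>j\<in>J. of_int j * e * indicator (A j) x)\<bar> \<le> e" if x: "x \<in> space M" for x
  proof -
    have "- B / e \<le> \<phi> x / e" "\<phi> x / e \<le> B / e"
      using bounded[OF x] \<open>0 < e\<close> by (intro divide_right_mono; simp add: abs_le_iff)+
    then have "\<lfloor>\<phi> x / e\<rfloor> \<in> J"
      unfolding J_def by (simp add: floor_mono)
    have "(\<Sum>j\<in>J. of_int j * e * indicator (A j) x) = (\<Sum>j\<in>J. if j = \<lfloor>\<phi> x / e\<rfloor> then of_int j * e else 0)"
      using x by (intro sum.cong) (auto simp: A_def)
    also have "\<dots> = of_int \<lfloor>\<phi> x / e\<rfloor> * e"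
      using \<open>\<lfloor>\<phi> x / e\<rfloor> \<in> J\<close> by (simp add: sum.delta' J_def)
    moreover have "of_int \<lfloor>\<phi> x / e\<rfloor> * e \<le> \<phi> x" "\<phi> x < (of_int \<lfloor>\<phi> x / e\<rfloor> + 1) * e"
      using of_int_floor_le[of "\<phi> x / e"] real_of_int_floor_add_one_gt[of "\<phi> x / e"] \<open>0 < e\<close>
      by (simp_all only: pos_le_divide_eq pos_divide_less_eq)
    ultimately show ?thesis
      by (simp add: algebra_simps)
  qed
  moreover have "A j \<in> sets M" for j
    unfolding A_def by measurable
  ultimately show ?thesis
    using that[of J A "\<lambda>j. of_int j * e"] by (simp add: J_def)
qed

lemma integral_tendsto_if_setwise_tendsto:
  fixes \<phi> :: "'a \<Rightarrow> real"
  assumes \<mu>: "\<And>n. \<mu> n \<in> space (prob_algebra M)" and \<pi>: "\<pi> \<in> space (prob_algebra M)"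
    and setwise: "\<And>A. A \<in> sets M \<Longrightarrow> (\<lambda>n. measure (\<mu> n) A) \<longlonglongrightarrow> measure \<pi> A"
    and \<phi>: "\<phi> \<in> borel_measurable M" and bounded: "\<And>x. x \<in> space M \<Longrightarrow> \<bar>\<phi> x\<bar> \<le> B"
  shows "(\<lambda>n. \<integral>x. \<phi> x \<partial>\<mu> n) \<longlonglongrightarrow> (\<integral>x. \<phi> x \<partial>\<pi>)"
proof (rule tendsto_if_uniformly_approximated)
  fix e :: real
  assume "0 < e"
  then obtain J :: "int set" and A c where J: "finite J" and A: "\<And>j. A j \<in> sets M"
    and approx: "\<And>x. x \<in> space M \<Longrightarrow> \<bar>\<phi> x - (\<Sum>j\<in>J. c j * indicator (A j) x)\<bar> \<le> e"
    using uniform_approximation_by_step_function[OF \<phi> bounded] by blast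
  have close: "\<bar>(\<integral>x. \<phi> x \<partial>\<nu>) - (\<Sum>j\<in>J. c j * measure \<nu> (A j))\<bar> \<le> e"
    if \<nu>: "\<nu> \<in> space (prob_algebra M)" for \<nu>
  proof -
    have sets: "sets \<nu> = sets M" and "prob_space \<nu>"
      using \<nu> by (auto simp: space_prob_algebra)
    interpret prob_space \<nu> by fact
    have space: "space \<nu> = space M"
      by (rule sets_eq_imp_space_eq[OF sets])
    have step_integrable: "integrable \<nu> (\<lambda>x. c j * indicator (A j) x)" for j
      using A sets by (intro integrable_mult_right integrable_real_indicator) (auto simp: emeasure_eq_measure)
    have "(\<integral>x. (\<Sum>j\<in>J. c j * indicator (A j) x) \<partial>\<nu>) = (\<Sum>j\<in>J. c j * measure \<nu> (A j))"
      using A sets.sets_into_space[of "A _" M]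
      by (subst Bochner_Integration.integral_sum[OF step_integrable]) (simp_all add: Int_absorb2 space)
    moreover have "\<bar>(\<integral>x. \<phi> x \<partial>\<nu>) - (\<integral>x. (\<Sum>j\<in>J. c j * indicator (A j) x) \<partial>\<nu>)\<bar> \<le> e"
    proof (rule abs_integral_diff_le[OF \<open>prob_space \<nu>\<close>])
      show "integrable \<nu> \<phi>"
        using \<phi> bounded sets
        by (intro integrable_const_bound[where B=B]) (auto simp: space cong: measurable_cong_sets)
    qed (use step_integrable approx in \<open>auto simp: space\<close>)
    ultimately show ?thesis
      by simp
  qed
  show "\<exists>g l. g \<longlonglongrightarrow> l \<and> (\<forall>n. \<bar>(\<integral>x. \<phi> x \<partial>\<mu> n) - g n\<bar> \<le> e) \<and> \<bar>(\<integral>x. \<phi> x \<partial>\<pi>) - l\<bar> \<le> e"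
  proof (intro exI conjI allI)
    show "(\<lambda>n. \<Sum>j\<in>J. c j * measure (\<mu> n) (A j)) \<longlonglongrightarrow> (\<Sum>j\<in>J. c j * measure \<pi> (A j))"
      by (intro tendsto_sum tendsto_mult_left setwise A)
  qed (use close[OF \<mu>] close[OF \<pi>] in auto)
qed

lemma integral_bind_kernel_pow_tendsto:
  fixes \<phi> :: "'a \<Rightarrow> real"
  assumes K: "K \<in> M \<rightarrow>\<^sub>M prob_algebra M" and \<nu>: "\<nu> \<in> space (prob_algebra M)"
    and \<pi>: "\<pi> \<in> space (prob_algebra M)"
    and tv: "\<And>x n. x \<in> space M \<Longrightarrow> 1 \<le> n \<Longrightarrow> tv_dist (kernel_pow M K n x) \<pi> \<le> e n"
    and e: "e \<longlonglongrightarrow> 0"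
    and \<phi>: "\<phi> \<in> borel_measurable M" and bounded: "\<And>x. x \<in> space M \<Longrightarrow> \<bar>\<phi> x\<bar> \<le> B"
  shows "(\<lambda>n. \<integral>x. \<phi> x \<partial>bind \<nu> (kernel_pow M K n)) \<longlonglongrightarrow> (\<integral>x. \<phi> x \<partial>\<pi>)"
  using bind_in_space_prob_algebra[OF \<nu> measurable_kernel_pow[OF K]] \<pi>
    measure_bind_kernel_pow_tendsto[OF K \<nu> \<pi> _ tv e] \<phi> bounded
  by (rule integral_tendsto_if_setwise_tendsto)

section \<open>Coupled chains\<close>

lemma
  assumes K: "K \<in> M \<rightarrow>\<^sub>M prob_algebra M" and nt: "nt \<in> space (prob_algebra (M \<Otimes>\<^sub>M M))"
  shows check_nu_in_prob_algebra: "check_nu M K nt \<in> space (prob_algebra (M \<Otimes>\<^sub>M M))"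
    and distr_check_nu_fst: "distr (check_nu M K nt) M fst = bind (distr nt M fst) K"
    and distr_check_nu_snd: "distr (check_nu M K nt) M snd = distr nt M snd"
proof -
  define F where "F p = distr (K (fst p)) (M \<Otimes>\<^sub>M M) (\<lambda>x. (x, snd p))" for p
  have check_nu: "check_nu M K nt = bind nt F"
    unfolding check_nu_def F_def by (simp add: case_prod_beta')
  have [measurable]: "K \<in> M \<rightarrow>\<^sub>M prob_algebra M"
    by (rule K)
  have F: "F \<in> M \<Otimes>\<^sub>M M \<rightarrow>\<^sub>M prob_algebra (M \<Otimes>\<^sub>M M)"
    unfolding F_def by measurable
  have sets_nt: "sets nt = sets (M \<Otimes>\<^sub>M M)" and nonempty: "space nt \<noteq> {}"
    using nt by (auto simp: space_prob_algebra prob_space.not_empty)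
  have F': "F \<in> nt \<rightarrow>\<^sub>M subprob_algebra (M \<Otimes>\<^sub>M M)"
    using measurable_prob_algebraD[OF F] by (subst measurable_cong_sets[OF sets_nt refl])
  show "check_nu M K nt \<in> space (prob_algebra (M \<Otimes>\<^sub>M M))"
    unfolding check_nu by (rule bind_in_space_prob_algebra[OF nt F])
  have marginals: "distr (F p) M fst = K (fst p)" "distr (F p) M snd = return M (snd p)"
    if "p \<in> space nt" for p
  proof -
    have p: "fst p \<in> space M" "snd p \<in> space M"
      using that by (simp_all add: sets_eq_imp_space_eq[OF sets_nt] space_pair_measure mem_Times_iff)
    have sets_K: "sets (K (fst p)) = sets M" and "prob_space (K (fst p))"
      using measurable_space[OF K p(1)] by (simp_all add: space_prob_algebra)
    have pair: "(\<lambda>x. (x, snd p)) \<in> K (fst p) \<rightarrow>\<^sub>M M \<Otimes>\<^sub>M M"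
      using measurable_Pair2'[OF p(2)] by (subst measurable_cong_sets[OF sets_K refl])
    show "distr (F p) M fst = K (fst p)"
      unfolding F_def using pair by (simp add: distr_distr comp_def distr_id2[OF sets_K[symmetric]])
    show "distr (F p) M snd = return M (snd p)"
      unfolding F_def using pair
      by (simp add: distr_distr comp_def prob_space.distr_const[OF \<open>prob_space (K (fst p))\<close> p(2)])
  qed
  have "distr (check_nu M K nt) M fst = bind nt (\<lambda>p. distr (F p) M fst)"
    unfolding check_nu by (rule distr_bind[OF F' nonempty measurable_fst])
  also have "\<dots> = bind nt (\<lambda>p. K (fst p))"
    by (intro bind_cong refl) (simp add: marginals)
  also have "\<dots> = bind (distr nt M fst) K"
    by (intro bind_distr[symmetric, OF _ measurable_prob_algebraD[OF K] nonempty])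
      (subst measurable_cong_sets[OF sets_nt refl], measurable)
  finally show "distr (check_nu M K nt) M fst = bind (distr nt M fst) K" .
  have "distr (check_nu M K nt) M snd = bind nt (\<lambda>p. distr (F p) M snd)"
    unfolding check_nu by (rule distr_bind[OF F' nonempty measurable_snd])
  also have "\<dots> = bind nt (\<lambda>p. return M (snd p))"
    by (intro bind_cong refl) (simp add: marginals)
  also have "\<dots> = distr nt M snd"
    by (intro bind_return_distr'[OF nonempty]) (subst measurable_cong_sets[OF sets_nt refl], measurable)
  finally show "distr (check_nu M K nt) M snd = distr nt M snd" .
qed

lemma pred_diagonal_if_measurable_metric:
  fixes d :: "'a \<Rightarrow> 'a \<Rightarrow> real"
  assumes metric: "\<And>x y. x \<in> space M \<Longrightarrow> y \<in> space M \<Longrightarrow> d x y = 0 \<longleftrightarrow> x = y"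
    and d: "case_prod d \<in> borel_measurable (M \<Otimes>\<^sub>M M)"
  shows "Measurable.pred (M \<Otimes>\<^sub>M M) (\<lambda>z. fst z = snd z)"
proof -
  have "Measurable.pred (M \<Otimes>\<^sub>M M) (\<lambda>z. d (fst z) (snd z) = 0)"
    using d by (intro pred_eq_const1[where N=borel] borel_closed) (simp_all add: case_prod_beta')
  moreover have "d (fst z) (snd z) = 0 \<longleftrightarrow> fst z = snd z" if "z \<in> space (M \<Otimes>\<^sub>M M)" for z
    using that metric by (auto simp: space_pair_measure split: prod.splits)
  ultimately show ?thesis
    by (subst measurable_cong[symmetric]) auto
qed

definition geometrically_ergodic :: "'a measure \<Rightarrow> ('a \<Rightarrow> 'a measure) \<Rightarrow> 'a measure \<Rightarrow> bool" where
  "geometrically_ergodic M K \<pi> \<longleftrightarrow> (\<exists>C \<rho>::real. 0 < \<rho> \<and> \<rho> < 1 \<and>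
     (\<forall>x\<in>space M. \<forall>n\<ge>1. tv_dist (kernel_pow M K n x) \<pi> \<le> C * \<rho> ^ n))"

definition geometric_tail :: "'w measure \<Rightarrow> ('w \<Rightarrow> enat) \<Rightarrow> bool" where
  "geometric_tail P T \<longleftrightarrow> (\<exists>C \<rho>::real. 0 < \<rho> \<and> \<rho> < 1 \<and>
     (\<forall>n\<ge>1. measure P {\<omega> \<in> space P. T \<omega> > enat n} \<le> C * \<rho> ^ n))"

lemma summable_tail_if_geometric_tail:
  assumes "geometric_tail P T"
  shows "summable (\<lambda>n. measure P {\<omega> \<in> space P. enat n < T \<omega>})"
  using assms unfolding geometric_tail_def
  by (auto intro!: summable_comparison_test'[where N=1, OF summable_mult[OF summable_geometric]])

lemma coupled_chain_ub_est_unbiased: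
  fixes \<phi> :: "'a \<Rightarrow> real" and h :: "'s \<Rightarrow> 'a \<times> 'a"
  assumes P: "prob_space P" and chain: "is_markov_chain P S \<nu> Kc Y"
    and Kc: "Kc \<in> S \<rightarrow>\<^sub>M prob_algebra S" and \<nu>: "\<nu> \<in> space (prob_algebra S)"
    and h[measurable]: "h \<in> S \<rightarrow>\<^sub>M M \<Otimes>\<^sub>M M" and K: "K \<in> M \<rightarrow>\<^sub>M prob_algebra M"
    and marginals: "\<And>z. z \<in> space S \<Longrightarrow>
      distr (Kc z) M (\<lambda>z'. fst (h z')) = K (fst (h z)) \<and> distr (Kc z) M (\<lambda>z'. snd (h z')) = K (snd (h z))"
    and init: "distr \<nu> (M \<Otimes>\<^sub>M M) h = check_nu M K nt"
    and nt: "nt \<in> space (prob_algebra (M \<Otimes>\<^sub>M M))"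
    and nt_fst: "distr nt M fst = \<mu>" and nt_snd: "distr nt M snd = \<mu>"
    and \<pi>: "\<pi> \<in> space (prob_algebra M)"
    and ergodic: "geometrically_ergodic M K \<pi>"
    and diagonal[measurable]: "Measurable.pred (M \<Otimes>\<^sub>M M) (\<lambda>z. fst z = snd z)"
    and faithful: "\<And>\<omega> n. \<omega> \<in> space P \<Longrightarrow>
      meet_time (\<lambda>n \<omega>. fst (h (Y n \<omega>))) (\<lambda>n \<omega>. snd (h (Y n \<omega>))) \<omega> \<le> enat n \<Longrightarrow>
      fst (h (Y n \<omega>)) = snd (h (Y n \<omega>))"
    and tail: "geometric_tail P (meet_time (\<lambda>n \<omega>. fst (h (Y n \<omega>))) (\<lambda>n \<omega>. snd (h (Y n \<omega>))))"
    and \<phi>[measurable]: "\<phi> \<in> borel_measurable M" and bounded: "\<And>x. x \<in> space M \<Longrightarrow> \<bar>\<phi> x\<bar> \<le> B"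
  shows "integrable P (ub_est \<phi> (\<lambda>n \<omega>. fst (h (Y n \<omega>))) (\<lambda>n \<omega>. snd (h (Y n \<omega>))) k) \<and>
    (\<integral>\<omega>. ub_est \<phi> (\<lambda>n \<omega>. fst (h (Y n \<omega>))) (\<lambda>n \<omega>. snd (h (Y n \<omega>))) k \<omega> \<partial>P) = (\<integral>x. \<phi> x \<partial>\<pi>)"
proof -
  have Y[measurable]: "Y n \<in> P \<rightarrow>\<^sub>M S" for n
    using chain by (simp add: is_markov_chain_def)
  have \<mu>: "\<mu> \<in> space (prob_algebra M)"
    using measurable_space[OF measurable_distr_prob_space[OF measurable_fst] nt] nt_fst by simp
  have sets_\<nu>: "sets \<nu> = sets S"
    using \<nu> by (simp add: space_prob_algebra)
  have law: "distr P M (\<lambda>\<omega>. c (h (Y n \<omega>))) = bind (distr (check_nu M K nt) M c) (kernel_pow M K n)"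
    if c: "c \<in> M \<Otimes>\<^sub>M M \<rightarrow>\<^sub>M M" and "\<And>z. z \<in> space S \<Longrightarrow> distr (Kc z) M (\<lambda>z'. c (h z')) = K (c (h z))"
    for c n
  proof -
    have "distr \<nu> M (\<lambda>z. c (h z)) = distr (distr \<nu> (M \<Otimes>\<^sub>M M) h) M c"
      using c sets_\<nu> by (simp add: distr_distr comp_def cong: measurable_cong_sets)
    then show ?thesis
      using markov_chain_distr_coordinate[OF P chain Kc \<nu> K _ that(2)] c by (simp add: init)
  qed
  have expectation: "(\<integral>\<omega>. \<phi> (c (h (Y n \<omega>))) \<partial>P) = (\<integral>x. \<phi> x \<partial>distr P M (\<lambda>\<omega>. c (h (Y n \<omega>))))"
    if "c \<in> M \<Otimes>\<^sub>M M \<rightarrow>\<^sub>M M" for c n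
    using measurable_compose[OF measurable_compose[OF Y h] that] by (simp add: integral_distr)
  define a where "a n = (\<integral>x. \<phi> x \<partial>bind \<mu> (kernel_pow M K n))" for n
  have "(\<integral>\<omega>. \<phi> (fst (h (Y n \<omega>))) \<partial>P) = a (Suc n)" for n
    using law[OF measurable_fst, of n] marginals
    by (simp add: a_def expectation distr_check_nu_fst[OF K nt] nt_fst bind_bind_kernel_pow[OF K \<mu>])
  moreover have "(\<integral>\<omega>. \<phi> (snd (h (Y n \<omega>))) \<partial>P) = a n" for n
    using law[OF measurable_snd, of n] marginals
    by (simp add: a_def expectation distr_check_nu_snd[OF K nt] nt_snd)
  moreover have "a \<longlonglongrightarrow> (\<integral>x. \<phi> x \<partial>\<pi>)"
  proof -
    obtain C \<rho> :: real where "0 < \<rho>" "\<rho> < 1"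
      and "\<forall>x\<in>space M. \<forall>n\<ge>1. tv_dist (kernel_pow M K n x) \<pi> \<le> C * \<rho> ^ n"
      using ergodic unfolding geometrically_ergodic_def by blast
    then show ?thesis
      unfolding a_def by (intro integral_bind_kernel_pow_tendsto[OF K \<mu> \<pi> _ _ \<phi> bounded])
        (auto intro!: tendsto_mult_right_zero LIMSEQ_power_zero)
  qed
  moreover have "summable (\<lambda>n. measure P {\<omega> \<in> space P.
      enat n < meet_time (\<lambda>n \<omega>. fst (h (Y n \<omega>))) (\<lambda>n \<omega>. snd (h (Y n \<omega>))) \<omega>})"
    using tail by (rule summable_tail_if_geometric_tail)
  ultimately show ?thesis
    using faithful P bounded by (intro ub_est_unbiased[where M=M]) auto
qed

theorem propositionA1:
  fixes M :: "'a measure"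
    and d :: "'a \<Rightarrow> 'a \<Rightarrow> real"
    and pi :: "nat \<Rightarrow> 'a measure"
    and K :: "nat \<Rightarrow> 'a \<Rightarrow> 'a measure"
    and nu :: "nat \<Rightarrow> 'a measure"
    and nut :: "nat \<Rightarrow> ('a \<times> 'a) measure"
    and P :: "'w measure"
    and Kc0 :: "'a \<times> 'a \<Rightarrow> ('a \<times> 'a) measure"
    and Y0 :: "nat \<Rightarrow> 'w \<Rightarrow> 'a \<times> 'a"
    and Kc :: "nat \<Rightarrow> ('a \<times> 'a) \<times> ('a \<times> 'a) \<Rightarrow> (('a \<times> 'a) \<times> ('a \<times> 'a)) measure"
    and nuc :: "nat \<Rightarrow> (('a \<times> 'a) \<times> ('a \<times> 'a)) measure"
    and Z :: "nat \<Rightarrow> nat \<Rightarrow> 'w \<Rightarrow> ('a \<times> 'a) \<times> ('a \<times> 'a)"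
  assumes
    \<comment> \<open>measurable metric on X, bounded, and X compact w.r.t. it\<close>
    metric: "\<forall>x\<in>space M. \<forall>y\<in>space M. (d x y = 0 \<longleftrightarrow> x = y) \<and> d x y = d y x"
    and triangle: "\<forall>x\<in>space M. \<forall>y\<in>space M. \<forall>z\<in>space M. d x z \<le> d x y + d y z"
    and d_meas: "case_prod d \<in> borel_measurable (M \<Otimes>\<^sub>M M)"
    and d_bdd: "\<exists>B. \<forall>x\<in>space M. \<forall>y\<in>space M. d x y \<le> B"
    and compact: "\<forall>s::nat \<Rightarrow> 'a. (\<forall>n. s n \<in> space M) \<longrightarrow>
        (\<exists>r x. strict_mono r \<and> x \<in> space M \<and> (\<lambda>n. d (s (r n)) x) \<longlonglongrightarrow> 0)"
    \<comment> \<open>probability measures, Markov kernels, invariance\<close>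
    and pi_prob: "\<And>l. pi l \<in> space (prob_algebra M)"
    and K_kernel: "\<And>l. K l \<in> M \<rightarrow>\<^sub>M prob_algebra M"
    and K_inv: "\<And>l. bind (pi l) (K l) = pi l"
    and nu_prob: "\<And>l. nu l \<in> space (prob_algebra M)"
    and nut_prob: "\<And>s. nut s \<in> space (prob_algebra (M \<Otimes>\<^sub>M M))"
    and nut_fst: "\<And>s. distr (nut s) M fst = nu s"
    and nut_snd: "\<And>s. distr (nut s) M snd = nu s"
    \<comment> \<open>level-0 coupled chain\<close>
    and P_prob: "prob_space P"
    and Kc0_kernel: "Kc0 \<in> (M \<Otimes>\<^sub>M M) \<rightarrow>\<^sub>M prob_algebra (M \<Otimes>\<^sub>M M)"
    and Kc0_fst: "\<And>x w. x \<in> space M \<Longrightarrow> w \<in> space M \<Longrightarrow> distr (Kc0 (x, w)) M fst = K 0 x"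
    and Kc0_snd: "\<And>x w. x \<in> space M \<Longrightarrow> w \<in> space M \<Longrightarrow> distr (Kc0 (x, w)) M snd = K 0 w"
    and Y0_chain: "is_markov_chain P (M \<Otimes>\<^sub>M M) (check_nu M (K 0) (nut 0)) Kc0 Y0"
    and Y0_faithful: "\<And>\<omega> n. \<omega> \<in> space P \<Longrightarrow>
        meet_time (\<lambda>n \<omega>. fst (Y0 n \<omega>)) (\<lambda>n \<omega>. snd (Y0 n \<omega>)) \<omega> \<le> enat n \<Longrightarrow>
        fst (Y0 n \<omega>) = snd (Y0 n \<omega>)"
    \<comment> \<open>increment chains, l >= 1\<close>
    and Kc_kernel: "\<And>l. 1 \<le> l \<Longrightarrow>
        Kc l \<in> ((M \<Otimes>\<^sub>M M) \<Otimes>\<^sub>M (M \<Otimes>\<^sub>M M)) \<rightarrow>\<^sub>M prob_algebra ((M \<Otimes>\<^sub>M M) \<Otimes>\<^sub>M (M \<Otimes>\<^sub>M M))"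
    and Kc_marg: "\<And>l z. 1 \<le> l \<Longrightarrow> z \<in> space ((M \<Otimes>\<^sub>M M) \<Otimes>\<^sub>M (M \<Otimes>\<^sub>M M)) \<Longrightarrow>
        distr (Kc l z) M (\<lambda>z'. fst (fst z')) = K l (fst (fst z)) \<and>
        distr (Kc l z) M (\<lambda>z'. snd (fst z')) = K l (snd (fst z)) \<and>
        distr (Kc l z) M (\<lambda>z'. fst (snd z')) = K (l - 1) (fst (snd z)) \<and>
        distr (Kc l z) M (\<lambda>z'. snd (snd z')) = K (l - 1) (snd (snd z))"
    and nuc_prob: "\<And>l. 1 \<le> l \<Longrightarrow> nuc l \<in> space (prob_algebra ((M \<Otimes>\<^sub>M M) \<Otimes>\<^sub>M (M \<Otimes>\<^sub>M M)))"
    and nuc_fst: "\<And>l. 1 \<le> l \<Longrightarrow> distr (nuc l) (M \<Otimes>\<^sub>M M) fst = check_nu M (K l) (nut l)"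
    and nuc_snd: "\<And>l. 1 \<le> l \<Longrightarrow> distr (nuc l) (M \<Otimes>\<^sub>M M) snd = check_nu M (K (l - 1)) (nut (l - 1))"
    and Z_chain: "\<And>l. 1 \<le> l \<Longrightarrow> is_markov_chain P ((M \<Otimes>\<^sub>M M) \<Otimes>\<^sub>M (M \<Otimes>\<^sub>M M)) (nuc l) (Kc l) (Z l)"
    and Z_faithful_l: "\<And>l \<omega> n. 1 \<le> l \<Longrightarrow> \<omega> \<in> space P \<Longrightarrow>
        meet_time (\<lambda>n \<omega>. fst (fst (Z l n \<omega>))) (\<lambda>n \<omega>. snd (fst (Z l n \<omega>))) \<omega> \<le> enat n \<Longrightarrow>
        fst (fst (Z l n \<omega>)) = snd (fst (Z l n \<omega>))"
    and Z_faithful_lm1: "\<And>l \<omega> n. 1 \<le> l \<Longrightarrow> \<omega> \<in> space P \<Longrightarrow>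
        meet_time (\<lambda>n \<omega>. fst (snd (Z l n \<omega>))) (\<lambda>n \<omega>. snd (snd (Z l n \<omega>))) \<omega> \<le> enat n \<Longrightarrow>
        fst (snd (Z l n \<omega>)) = snd (snd (Z l n \<omega>))"
    \<comment> \<open>(A1)\<close>
    and A1: "\<exists>C \<rho>::real. 0 < \<rho> \<and> \<rho> < 1 \<and>
        (\<forall>l. \<forall>x\<in>space M. \<forall>n\<ge>1. tv_dist (kernel_pow M (K l) n x) (pi l) \<le> C * \<rho> ^ n)"
    \<comment> \<open>(A2)\<close>
    and A2: "\<exists>C \<rho>::real. 0 < \<rho> \<and> \<rho> < 1 \<and> (\<forall>n\<ge>1.
        measure P {\<omega> \<in> space P.
           meet_time (\<lambda>n \<omega>. fst (Y0 n \<omega>)) (\<lambda>n \<omega>. snd (Y0 n \<omega>)) \<omega> > enat n} \<le> C * \<rho> ^ n \<and>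
        (\<forall>l\<ge>1.
          measure P {\<omega> \<in> space P.
             meet_time (\<lambda>n \<omega>. fst (fst (Z l n \<omega>))) (\<lambda>n \<omega>. snd (fst (Z l n \<omega>))) \<omega> > enat n}
            \<le> C * \<rho> ^ n \<and>
          measure P {\<omega> \<in> space P.
             meet_time (\<lambda>n \<omega>. fst (snd (Z l n \<omega>))) (\<lambda>n \<omega>. snd (snd (Z l n \<omega>))) \<omega> > enat n}
            \<le> C * \<rho> ^ n))"
  shows "\<forall>l\<ge>1. \<forall>\<phi>::'a \<Rightarrow> real. \<phi> \<in> borel_measurable M \<and> (\<exists>B. \<forall>x\<in>space M. \<bar>\<phi> x\<bar> \<le> B) \<longrightarrow>
      (\<integral>\<omega>. ub_est \<phi> (\<lambda>n \<omega>. fst (Y0 n \<omega>)) (\<lambda>n \<omega>. snd (Y0 n \<omega>)) 0 \<omega> \<partial>P) = (\<integral>x. \<phi> x \<partial>pi 0) \<and>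
      (\<integral>\<omega>. ub_est \<phi> (\<lambda>n \<omega>. fst (fst (Z l n \<omega>))) (\<lambda>n \<omega>. snd (fst (Z l n \<omega>))) 0 \<omega>
            - ub_est \<phi> (\<lambda>n \<omega>. fst (snd (Z l n \<omega>))) (\<lambda>n \<omega>. snd (snd (Z l n \<omega>))) 0 \<omega> \<partial>P)
        = (\<integral>x. \<phi> x \<partial>pi l) - (\<integral>x. \<phi> x \<partial>pi (l - 1))"
proof (intro allI impI, elim conjE exE, goal_cases)
  case (1 l \<phi> B)
  then have l: "1 \<le> l" and \<phi>: "\<phi> \<in> borel_measurable M" and bounded: "\<And>x. x \<in> space M \<Longrightarrow> \<bar>\<phi> x\<bar> \<le> B"
    by simp_all
  have diagonal: "Measurable.pred (M \<Otimes>\<^sub>M M) (\<lambda>z. fst z = snd z)"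
    using metric d_meas by (intro pred_diagonal_if_measurable_metric) auto
  have ergodic: "geometrically_ergodic M (K s) (pi s)" for s
    using A1 unfolding geometrically_ergodic_def by blast
  have tails: "geometric_tail P (meet_time (\<lambda>n \<omega>. fst (Y0 n \<omega>)) (\<lambda>n \<omega>. snd (Y0 n \<omega>)))"
      "geometric_tail P (meet_time (\<lambda>n \<omega>. fst (fst (Z l n \<omega>))) (\<lambda>n \<omega>. snd (fst (Z l n \<omega>))))"
      "geometric_tail P (meet_time (\<lambda>n \<omega>. fst (snd (Z l n \<omega>))) (\<lambda>n \<omega>. snd (snd (Z l n \<omega>))))"
    using A2 l unfolding geometric_tail_def by blast+
  note unbiased = coupled_chain_ub_est_unbiased[OF P_prob _ _ _ _ K_kernel _ _ nut_prob nut_fst nut_snd pi_prob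
      ergodic diagonal _ _ \<phi>]
  have "(\<integral>\<omega>. ub_est \<phi> (\<lambda>n \<omega>. fst (Y0 n \<omega>)) (\<lambda>n \<omega>. snd (Y0 n \<omega>)) 0 \<omega> \<partial>P) = (\<integral>x. \<phi> x \<partial>pi 0)"
    using check_nu_in_prob_algebra[OF K_kernel nut_prob] Kc0_fst Kc0_snd Y0_faithful bounded
    by (intro unbiased[where h="\<lambda>z. z", OF Y0_chain Kc0_kernel _ _ _ _ _ tails(1), THEN conjunct2])
      (auto simp: space_pair_measure space_prob_algebra distr_id2)
  moreover have "integrable P (ub_est \<phi> (\<lambda>n \<omega>. fst (fst (Z l n \<omega>))) (\<lambda>n \<omega>. snd (fst (Z l n \<omega>))) 0) \<and>
      (\<integral>\<omega>. ub_est \<phi> (\<lambda>n \<omega>. fst (fst (Z l n \<omega>))) (\<lambda>n \<omega>. snd (fst (Z l n \<omega>))) 0 \<omega> \<partial>P) = (\<integral>x. \<phi> x \<partial>pi l)"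
    using Kc_marg[OF l] Z_faithful_l[OF l] bounded
    by (intro unbiased[where h=fst, OF Z_chain[OF l] Kc_kernel[OF l] nuc_prob[OF l] _ _ nuc_fst[OF l] _ tails(2)])
      auto
  moreover have "integrable P (ub_est \<phi> (\<lambda>n \<omega>. fst (snd (Z l n \<omega>))) (\<lambda>n \<omega>. snd (snd (Z l n \<omega>))) 0) \<and>
      (\<integral>\<omega>. ub_est \<phi> (\<lambda>n \<omega>. fst (snd (Z l n \<omega>))) (\<lambda>n \<omega>. snd (snd (Z l n \<omega>))) 0 \<omega> \<partial>P) = (\<integral>x. \<phi> x \<partial>pi (l - 1))"
    using Kc_marg[OF l] Z_faithful_lm1[OF l] bounded
    by (intro unbiased[where h=snd, OF Z_chain[OF l] Kc_kernel[OF l] nuc_prob[OF l] _ _ nuc_snd[OF l] _ tails(3)])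
      auto
  ultimately show ?case
    by simp
qed

end
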